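(* Let $\mathbb{T}=\mathbb{R}/\mathbb{Z}$, let $u:\mathbb{T}\times[0,T]\to\mathbb{R}$ be smooth and $\varphi_0\in C^1(\mathbb{T})$. Consider the grid CIP scheme: $F_j^0=\varphi_0(x_j)$, $G_j^0=\varphi_0'(x_j)$; given $\{F_j^n,G_j^n\}_{j=0}^{M-1}$, let $\varphi_h^n\in V_h$ be the unique function with $\varphi_h^n(x_j)=F_j^n$, $(\varphi_h^n)'(x_j)=G_j^n$; compute, with $\boldsymbol{u}(y_0,y_1,t)=(u(y_0,t),\,y_1u_x(y_0,t))$ and $\boldsymbol{y}_j=(x_j,1)$, $\boldsymbol{k}_{j,1}^n=\boldsymbol{u}(\boldsymbol{y}_j,t^{n+1})$, $\boldsymbol{k}_{j,2}^n=\boldsymbol{u}(\boldsymbol{y}_j-\tfrac{\Delta t_n}{2}\boldsymbol{k}_{j,1}^n,t^{n+1}-\tfrac{\Delta t_n}{2})$, $\boldsymbol{k}_{j,3}^n=\boldsymbol{u}(\boldsymbol{y}_j-\Delta t_n(-\boldsymbol{k}_{j,1}^n+2\boldsymbol{k}_{j,2}^n),t^{n+1}-\Delta t_n)$, $(X_{0,j}^n,X_{1,j}^n)=\boldsymbol{y}_j-\Delta t_n(\tfrac16\boldsymbol{k}_{j,1}^n+\tfrac46\boldsymbol{k}_{j,2}^n+\tfrac16\boldsymbol{k}_{j,3}^n)$; and set $F_j^{n+1}=\varphi_h^n(X_{0,j}^n)$, $G_j^{n+1}=X_{1,j}^n\,(\varphi_h^n)'(X_{0,j}^n)$, $j=0,\dots,M-1$.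 Then the functions $\varphi_h^n$ satisfy $\varphi_h^0=\mathcal{I}_h\varphi_0$ and $\varphi_h^{n+1}=\mathcal{I}_h(\varphi_h^n\circ X^n)$ for $n=0,1,\dots,N-1$.
   Context: Temporal mesh $0=t^0<\dots<t^N=T$, $\Delta t_n=t^{n+1}-t^n$; spatial mesh $0=x_0<\dots<x_M=1$. $V_h$: $C^1(\mathbb{T})$ functions, cubic on each $[x_j,x_{j+1}]$. $\mathcal{I}_h:C^1(\mathbb{T})\to V_h$: $(\mathcal{I}_hg)(x_j)=g(x_j)$, $(\mathcal{I}_hg)'(x_j)=g'(x_j)$, $j=0,\dots,M-1$. $X^n:\mathbb{T}\to\mathbb{T}$: $k_1^n(x)=u(x,t^{n+1})$, $k_2^n(x)=u(x-\tfrac{\Delta t_n}{2}k_1^n(x),t^{n+1}-\tfrac{\Delta t_n}{2})$, $k_3^n(x)=u(x-\Delta t_n(-k_1^n(x)+2k_2^n(x)),t^{n+1}-\Delta t_n)$, $X^n(x)=x-\Delta t_n(\tfrac16k_1^n(x)+\tfrac46k_2^n(x)+\tfrac16k_3^n(x))$. *)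

theory Defs
  imports "HOL-Analysis.Analysis" "HOL-Computational_Algebra.Polynomial"
begin

text \<open>Functions on the torus T = R/Z are represented as 1-periodic functions on the reals.\<close>
definition periodic1 :: "(real \<Rightarrow> 'a) \<Rightarrow> bool" where
  "periodic1 g \<longleftrightarrow> (\<forall>x. g (x + 1) = g x)"

definition C1T :: "(real \<Rightarrow> real) \<Rightarrow> bool" where
  "C1T g \<longleftrightarrow> periodic1 g \<and> (\<forall>x. g differentiable at x) \<and> continuous_on UNIV (deriv g)"

fun Ck_on :: "nat \<Rightarrow> ('a::real_normed_vector) set \<Rightarrow> ('a \<Rightarrow> real) \<Rightarrow> bool" where
  "Ck_on 0 S f = continuous_on S f"
| "Ck_on (Suc k) S f = ((\<forall>z\<in>S. f differentiable at z) \<and>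
      (\<forall>v. Ck_on k S (\<lambda>z. frechet_derivative f (at z) v)))"

definition smooth_on :: "('a::real_normed_vector) set \<Rightarrow> ('a \<Rightarrow> real) \<Rightarrow> bool" where
  "smooth_on S f \<longleftrightarrow> (\<forall>k. Ck_on k S f)"

definition spatial_mesh :: "nat \<Rightarrow> (nat \<Rightarrow> real) \<Rightarrow> bool" where
  "spatial_mesh M x \<longleftrightarrow> M \<ge> 1 \<and> x 0 = 0 \<and> x M = 1 \<and> (\<forall>j<M. x j < x (Suc j))"

definition time_mesh :: "nat \<Rightarrow> real \<Rightarrow> (nat \<Rightarrow> real) \<Rightarrow> bool" where
  "time_mesh N T t \<longleftrightarrow> N \<ge> 1 \<and> t 0 = 0 \<and> t N = T \<and> (\<forall>n<N. t n < t (Suc n))"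

definition Vh :: "nat \<Rightarrow> (nat \<Rightarrow> real) \<Rightarrow> (real \<Rightarrow> real) set" where
  "Vh M x = {g. C1T g \<and> (\<forall>j<M. \<exists>p :: real poly. degree p \<le> 3 \<and>
                  (\<forall>y\<in>{x j..x (Suc j)}. g y = poly p y))}"

definition Ih :: "nat \<Rightarrow> (nat \<Rightarrow> real) \<Rightarrow> (real \<Rightarrow> real) \<Rightarrow> (real \<Rightarrow> real)" where
  "Ih M x g = (THE f. f \<in> Vh M x \<and> (\<forall>j<M. f (x j) = g (x j) \<and> deriv f (x j) = deriv g (x j)))"

definition ux :: "(real \<Rightarrow> real \<Rightarrow> real) \<Rightarrow> real \<Rightarrow> real \<Rightarrow> real" where
  "ux u y t = deriv (\<lambda>z. u z t) y"

text \<open>Characteristic map X^n (third-order Runge--Kutta, backward in time).\<close>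
definition Xmap :: "(real \<Rightarrow> real \<Rightarrow> real) \<Rightarrow> (nat \<Rightarrow> real) \<Rightarrow> nat \<Rightarrow> real \<Rightarrow> real" where
  "Xmap u t n x =
    (let dt = t (Suc n) - t n;
         k1 = u x (t (Suc n));
         k2 = u (x - dt / 2 * k1) (t (Suc n) - dt / 2);
         k3 = u (x - dt * (- k1 + 2 * k2)) (t (Suc n) - dt)
     in x - dt * (k1 / 6 + 4 / 6 * k2 + k3 / 6))"

definition bu :: "(real \<Rightarrow> real \<Rightarrow> real) \<Rightarrow> real \<times> real \<Rightarrow> real \<Rightarrow> real \<times> real" where
  "bu u y s = (u (fst y) s, snd y * ux u (fst y) s)"

definition Xgrid :: "(real \<Rightarrow> real \<Rightarrow> real) \<Rightarrow> (nat \<Rightarrow> real) \<Rightarrow> (nat \<Rightarrow> real) \<Rightarrow> nat \<Rightarrow> nat \<Rightarrow> real \<times> real" where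
  "Xgrid u t x n j =
    (let dt = t (Suc n) - t n;
         y = (x j, 1::real);
         k1 = bu u y (t (Suc n));
         k2 = bu u (y - (dt / 2) *\<^sub>R k1) (t (Suc n) - dt / 2);
         k3 = bu u (y - dt *\<^sub>R (- k1 + 2 *\<^sub>R k2)) (t (Suc n) - dt)
     in y - dt *\<^sub>R ((1/6) *\<^sub>R k1 + (4/6) *\<^sub>R k2 + (1/6) *\<^sub>R k3))"

end

(*
  Both sides of each identity lie in V_h, and a function in V_h is determined by its
  Hermite data (values and derivatives) at the nodes: on each cell the difference of two
  such functions is a cubic with double roots at both endpoints, hence zero, and
  periodicity extends this from [0,1] to all of R.  So only the nodal data need to be
  compared.  The values agree by construction; for the derivatives, the second component
  of the Runge--Kutta step for the augmented velocity bold-u is, stage by stage, the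
  chain-rule derivative of the first, so X_{1,j}^n = (X^n)'(x_j) and
  G_j^{n+1} = (phi_h^n o X^n)'(x_j).
*)
theory Submission
  imports Defs "HOL-Library.Periodic_Fun"
begin

lemma order_ge_2_if_double_root:
  fixes p :: "'a::{idom,semiring_char_0} poly"
  assumes "p \<noteq> 0" "poly p a = 0" "poly (pderiv p) a = 0"
  shows "2 \<le> order a p"
proof -
  have "pderiv p \<noteq> 0"
    using assms pderiv_iszero by force
  then have "order a (pderiv p) \<noteq> 0"
    using assms(3) order_root by blast
  then show ?thesis
    using order_pderiv[OF assms(1,2)] by simp
qed

lemma cubic_eq_0_if_two_double_roots:
  fixes p :: "'a::{idom,semiring_char_0} poly"
  assumes "degree p \<le> 3" "a \<noteq> b"
    and "poly p a = 0" "poly (pderiv p) a = 0"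
    and "poly p b = 0" "poly (pderiv p) b = 0"
  shows "p = 0"
proof (rule ccontr)
  assume "p \<noteq> 0"
  have "[:-a, 1:]^2 dvd p"
    using order_ge_2_if_double_root[OF \<open>p \<noteq> 0\<close> assms(3,4)] order_divides by blast
  then obtain q where q: "p = [:-a, 1:]^2 * q" ..
  have "order b ([:-a, 1:]^2) = 0"
    using assms(2) by (intro order_0I) simp
  then have "order b q = order b p"
    using order_mult[of "[:-a, 1:]^2" q b] \<open>p \<noteq> 0\<close> q by simp
  then have "[:-b, 1:]^2 dvd q"
    using order_ge_2_if_double_root[OF \<open>p \<noteq> 0\<close> assms(5,6)] by (simp add: order_divides)
  then obtain r where r: "q = [:-b, 1:]^2 * r" ..
  have "r \<noteq> 0"
    using \<open>p \<noteq> 0\<close> q r by auto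
  then have "degree p = 4 + degree r"
    unfolding q r by (simp add: degree_mult_eq degree_power_eq)
  with assms(1) show False by simp
qed

lemma poly_pderiv_eq_deriv_if_eq_on_interval:
  fixes f :: "real \<Rightarrow> real"
  assumes "a < b" "y \<in> {a..b}" "\<forall>z\<in>{a..b}. f z = poly p z" "f differentiable at y"
  shows "poly (pderiv p) y = deriv f y"
proof -
  have "(f has_real_derivative deriv f y) (at y within {a..b})"
    using assms(4) by (simp add: has_field_derivative_at_within DERIV_deriv_iff_real_differentiable)
  then have "(poly p has_real_derivative deriv f y) (at y within {a..b})"
    by (rule has_field_derivative_transform_within[where d=1]) (use assms(2,3) in auto)
  moreover have "(poly p has_real_derivative poly (pderiv p) y) (at y within {a..b})"
    by (rule has_field_derivative_at_within[OF poly_DERIV])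
  ultimately show ?thesis
    using vector_derivative_unique_within_closed_interval[of a b y "poly p"] assms(1,2)
    by (auto simp: has_real_derivative_iff_has_vector_derivative)
qed

lemma periodic1_frac:
  fixes x :: real
  assumes "periodic1 f"
  shows "f (frac x) = f x"
proof -
  interpret periodic_fun_simple' f
    using assms by unfold_locales (simp add: periodic1_def)
  show ?thesis
    using plus_of_int[of "frac x" "\<lfloor>x\<rfloor>"] by (simp add: frac_def)
qed

lemma periodic1_eqI:
  assumes "periodic1 f" "periodic1 g" "\<forall>x\<in>{0..1}. f x = g x"
  shows "f = g"
proof
  fix x :: real
  have "frac x \<in> {0..1}"
    by (simp add: frac_ge_0 frac_lt_1 less_imp_le)
  then show "f x = g x"
    using assms periodic1_frac by metis
qed

lemma deriv_periodic1:
  assumes "periodic1 f"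
  shows "deriv f (x + 1) = deriv f x"
proof -
  have "(\<lambda>x. f (x + 1)) = f"
    using assms by (simp add: periodic1_def)
  then show ?thesis
    unfolding deriv_def DERIV_shift by simp
qed

lemma mesh_intervals_cover:
  fixes x :: "nat \<Rightarrow> 'a::linorder"
  assumes "0 < k" "x 0 \<le> y" "y \<le> x k"
  shows "\<exists>j<k. y \<in> {x j..x (Suc j)}"
  using assms
proof (induction k)
  case (Suc k)
  show ?case
  proof (cases "0 < k \<and> y \<le> x k")
    case True
    then show ?thesis
      using Suc.IH Suc.prems(2) less_SucI by blast
  next
    case False
    then have "x k \<le> y"
      using Suc.prems(2) by (cases k) auto
    then show ?thesis
      using Suc.prems(3) by auto
  qed
qed simp

lemma Vh_eq_on_mesh_interval:
  assumes f: "f \<in> Vh M x" and g: "g \<in> Vh M x" and j: "j < M" and mesh: "x j < x (Suc j)"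
    and left: "f (x j) = g (x j)" "deriv f (x j) = deriv g (x j)"
    and right: "f (x (Suc j)) = g (x (Suc j))" "deriv f (x (Suc j)) = deriv g (x (Suc j))"
    and z: "z \<in> {x j..x (Suc j)}"
  shows "f z = g z"
proof -
  obtain p :: "real poly" where p: "degree p \<le> 3" "\<forall>y\<in>{x j..x (Suc j)}. f y = poly p y"
    using f j unfolding Vh_def by auto
  obtain q :: "real poly" where q: "degree q \<le> 3" "\<forall>y\<in>{x j..x (Suc j)}. g y = poly q y"
    using g j unfolding Vh_def by auto
  have "f differentiable at y" "g differentiable at y" for y
    using f g unfolding Vh_def C1T_def by auto
  then have "poly (pderiv p) y = deriv f y" "poly (pderiv q) y = deriv g y"
    if "y \<in> {x j..x (Suc j)}" for y
    using poly_pderiv_eq_deriv_if_eq_on_interval[OF mesh that] p q by auto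
  then have "p - q = 0"
    using mesh left right p q
    by (intro cubic_eq_0_if_two_double_roots[of "p - q" "x j" "x (Suc j)"])
      (auto simp: degree_diff_le pderiv_diff)
  then show ?thesis
    using p q z by simp
qed

lemma Vh_eqI:
  assumes mesh: "spatial_mesh M x" and f: "f \<in> Vh M x" and g: "g \<in> Vh M x"
    and nodes: "\<forall>j<M. f (x j) = g (x j) \<and> deriv f (x j) = deriv g (x j)"
  shows "f = g"
proof (rule periodic1_eqI)
  show per: "periodic1 f" "periodic1 g"
    using f g unfolding Vh_def C1T_def by auto
  have x0: "x 0 = 0" and xM: "x M = 1" and "0 < M" and inc: "\<forall>j<M. x j < x (Suc j)"
    using mesh unfolding spatial_mesh_def by auto
  have all_nodes: "f (x j) = g (x j) \<and> deriv f (x j) = deriv g (x j)" if "j \<le> M" for j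
  proof (cases "j = M")
    case True
    have "f 1 = f 0" "g 1 = g 0"
      using per unfolding periodic1_def by (metis add_0)+
    moreover have "deriv f 1 = deriv f 0" "deriv g 1 = deriv g 0"
      using deriv_periodic1[OF per(1), of 0] deriv_periodic1[OF per(2), of 0] by simp_all
    ultimately show ?thesis
      using True nodes \<open>0 < M\<close> x0 xM by auto
  qed (use nodes that in auto)
  show "\<forall>y\<in>{0..1}. f y = g y"
  proof
    fix y :: real
    assume "y \<in> {0..1}"
    then obtain j where "j < M" "y \<in> {x j..x (Suc j)}"
      using mesh_intervals_cover[OF \<open>0 < M\<close>, of x y] x0 xM by auto
    then show "f y = g y"
      using Vh_eq_on_mesh_interval[OF f g] inc all_nodes by simp
  qed
qed

lemma Ih_eqI:
  assumes "spatial_mesh M x" "f \<in> Vh M x"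
    and "\<forall>j<M. f (x j) = g (x j) \<and> deriv f (x j) = deriv g (x j)"
  shows "Ih M x g = f"
  unfolding Ih_def using assms Vh_eqI[OF assms(1)] by (intro the_equality) auto

lemma time_mesh_mono:
  assumes "time_mesh N T t" "i \<le> k" "k \<le> N"
  shows "t i \<le> t k"
  using assms(2,3)
proof (induction rule: dec_induct)
  case (step n)
  then have "t n < t (Suc n)"
    using assms(1) unfolding time_mesh_def by auto
  with step show ?case by simp
qed simp

lemma time_mesh_step_subset:
  assumes "time_mesh N T t" "n < N"
  shows "{t n..t (Suc n)} \<subseteq> {0..T}"
  using time_mesh_mono[OF assms(1), of 0 n] time_mesh_mono[OF assms(1), of "Suc n" N] assms
  unfolding time_mesh_def by auto

lemma has_real_derivative_ux_if_smooth_on: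
  assumes "smooth_on U (\<lambda>(y, s). u y s)" "(y, s) \<in> U"
  shows "((\<lambda>z. u z s) has_real_derivative ux u y s) (at y)"
proof -
  have "Ck_on 1 U (\<lambda>(y, s). u y s)"
    using assms(1) unfolding smooth_on_def by blast
  then have "(\<lambda>(y, s). u y s) differentiable at (y, s)"
    using assms(2) by simp
  then have "((\<lambda>(y, s). u y s) \<circ> (\<lambda>z. (z, s))) differentiable at y"
    by (intro differentiable_chain_at) (auto intro!: derivative_intros)
  then show ?thesis
    by (simp add: o_def ux_def DERIV_deriv_iff_real_differentiable)
qed

lemma fst_Xgrid: "fst (Xgrid u t x n j) = Xmap u t n (x j)"
  unfolding Xgrid_def Xmap_def bu_def Let_def by simp

lemma Xmap_has_real_derivative_snd_Xgrid:
  assumes "t n \<le> t (Suc n)"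
    and ux: "\<And>y s. s \<in> {t n..t (Suc n)} \<Longrightarrow> ((\<lambda>z. u z s) has_real_derivative ux u y s) (at y)"
  shows "(Xmap u t n has_real_derivative snd (Xgrid u t x n j)) (at (x j))"
proof -
  have u_chain: "((\<lambda>z. u (g z) s) has_real_derivative D) (at y)"
    if "(g has_real_derivative g') (at y)" "s \<in> {t n..t (Suc n)}" "D = ux u (g y) s * g'"
    for g g' y s D
    using DERIV_chain2[OF ux that(1)] that(2,3) by simp
  have "t n \<in> {t n..t (Suc n)}" "t (Suc n) \<in> {t n..t (Suc n)}"
    "t (Suc n) - (t (Suc n) - t n) / 2 \<in> {t n..t (Suc n)}"
    using assms(1) by (auto simp: field_simps)
  then show ?thesis
    unfolding Xmap_def Xgrid_def bu_def Let_def
    by (auto intro!: derivative_eq_intros u_chain)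
qed

lemma grid_step_eq_Ih_comp_Xmap:
  assumes "spatial_mesh M x" "\<psi> \<in> Vh M x" "\<And>y. \<phi> differentiable at y"
    and "t n \<le> t (Suc n)"
    and "\<And>y s. s \<in> {t n..t (Suc n)} \<Longrightarrow> ((\<lambda>z. u z s) has_real_derivative ux u y s) (at y)"
    and "\<forall>j<M. \<psi> (x j) = \<phi> (fst (Xgrid u t x n j)) \<and>
          deriv \<psi> (x j) = snd (Xgrid u t x n j) * deriv \<phi> (fst (Xgrid u t x n j))"
  shows "\<psi> = Ih M x (\<phi> \<circ> Xmap u t n)"
proof (rule Ih_eqI[OF assms(1,2), symmetric])
  have "deriv (\<phi> \<circ> Xmap u t n) (x j) = deriv \<phi> (Xmap u t n (x j)) * snd (Xgrid u t x n j)" for j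
    using Xmap_has_real_derivative_snd_Xgrid[OF assms(4,5)] assms(3)
    by (intro DERIV_imp_deriv DERIV_chain) (auto simp: DERIV_deriv_iff_real_differentiable)
  then show "\<forall>j<M. \<psi> (x j) = (\<phi> \<circ> Xmap u t n) (x j) \<and>
      deriv \<psi> (x j) = deriv (\<phi> \<circ> Xmap u t n) (x j)"
    using assms(6) by (simp add: fst_Xgrid mult.commute)
qed

theorem lemma1:
  fixes N M :: nat and T :: real and t x :: "nat \<Rightarrow> real"
    and u :: "real \<Rightarrow> real \<Rightarrow> real" and \<phi>0 :: "real \<Rightarrow> real"
    and F G :: "nat \<Rightarrow> nat \<Rightarrow> real" and \<phi>h :: "nat \<Rightarrow> real \<Rightarrow> real"
  assumes tm: "time_mesh N T t"
    and sm: "spatial_mesh M x"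
    and u_smooth: "\<exists>U. open U \<and> UNIV \<times> {0..T} \<subseteq> U \<and> smooth_on U (\<lambda>(y, s). u y s)"
    and u_per: "\<forall>s\<in>{0..T}. \<forall>y. u (y + 1) s = u y s"
    and phi0: "C1T \<phi>0"
    and F0: "\<forall>j<M. F 0 j = \<phi>0 (x j)"
    and G0: "\<forall>j<M. G 0 j = deriv \<phi>0 (x j)"
    and phiV: "\<forall>n\<le>N. \<phi>h n \<in> Vh M x \<and>
                  (\<forall>j<M. \<phi>h n (x j) = F n j \<and> deriv (\<phi>h n) (x j) = G n j)"
    and Fstep: "\<forall>n<N. \<forall>j<M. F (Suc n) j = \<phi>h n (fst (Xgrid u t x n j))"
    and Gstep: "\<forall>n<N. \<forall>j<M. G (Suc n) j =
                   snd (Xgrid u t x n j) * deriv (\<phi>h n) (fst (Xgrid u t x n j))"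
  shows "\<phi>h 0 = Ih M x \<phi>0 \<and> (\<forall>n<N. \<phi>h (Suc n) = Ih M x (\<phi>h n \<circ> Xmap u t n))"
proof -
  obtain U where U: "UNIV \<times> {0..T} \<subseteq> U" "smooth_on U (\<lambda>(y, s). u y s)"
    using u_smooth by blast
  have u_deriv: "((\<lambda>z. u z s) has_real_derivative ux u y s) (at y)" if "s \<in> {0..T}" for y s
    using U that by (intro has_real_derivative_ux_if_smooth_on) auto
  have "\<phi>h (Suc n) = Ih M x (\<phi>h n \<circ> Xmap u t n)" if "n < N" for n
  proof (rule grid_step_eq_Ih_comp_Xmap[OF sm])
    show "\<phi>h (Suc n) \<in> Vh M x" "\<phi>h n differentiable at y" for y
      using phiV \<open>n < N\<close> unfolding Vh_def C1T_def by auto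
    show "t n \<le> t (Suc n)"
      using tm \<open>n < N\<close> unfolding time_mesh_def by (simp add: less_imp_le)
    show "((\<lambda>z. u z s) has_real_derivative ux u y s) (at y)" if "s \<in> {t n..t (Suc n)}" for y s
      using u_deriv time_mesh_step_subset[OF tm \<open>n < N\<close>] that by blast
  qed (use phiV Fstep Gstep \<open>n < N\<close> in simp)
  moreover have "\<phi>h 0 = Ih M x \<phi>0"
    using phiV F0 G0 by (intro Ih_eqI[OF sm, symmetric]) auto
  ultimately show ?thesis
    by blast
qed

end
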